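(* Let $K$ be a field, $R_1=K[x_1,\ldots,x_s]$, $R_2=K[x_{s+1},\ldots,x_n]$, $R=K[x_1,\ldots,x_n]$. Let $I$ be a monomial ideal in $R_1$ with minimal monomial generating set $\{u_1,\ldots,u_m\}$, and let $J_1,\ldots,J_m$ be monomial ideals in $R_2$. If $I$ does not have the copersistence property, then $L:=u_1J_1R+\cdots+u_mJ_mR$ does not have the copersistence property.
   Context: An ideal $I$ in a commutative Noetherian ring $R$ has the copersistence property if $\mathrm{Ass}_R(R/I^k)\supseteq\mathrm{Ass}_R(R/I^{k+1})$ for all $k\ge1$. *)

theory Defs
  imports Main "HOL-Library.Poly_Mapping"
begin

(* Polynomials over K in the variables x_0, x_1, ... : finitely supported maps
   from exponent vectors (monomials) to coefficients, with convolution product. *)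
type_synonym 'a mpoly = "(nat \<Rightarrow>\<^sub>0 nat) \<Rightarrow>\<^sub>0 'a"

(* K[x_i : i \<in> V] as a subset (subring) of the big polynomial ring *)
definition polyring :: "nat set \<Rightarrow> ('a::comm_ring_1) mpoly set" where
  "polyring V = {p. \<forall>e\<in>Poly_Mapping.keys p. Poly_Mapping.keys e \<subseteq> V}"

definition mmonom :: "(nat \<Rightarrow>\<^sub>0 nat) \<Rightarrow> ('a::comm_ring_1) mpoly" where
  "mmonom e = Poly_Mapping.single e 1"

definition mdvd :: "(nat \<Rightarrow>\<^sub>0 nat) \<Rightarrow> (nat \<Rightarrow>\<^sub>0 nat) \<Rightarrow> bool" where
  "mdvd a b \<longleftrightarrow> (\<forall>i. Poly_Mapping.lookup a i \<le> Poly_Mapping.lookup b i)"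

definition ideal_in :: "'a::comm_ring_1 set \<Rightarrow> 'a set \<Rightarrow> bool" where
  "ideal_in S I \<longleftrightarrow> I \<subseteq> S \<and> 0 \<in> I \<and> (\<forall>a\<in>I. \<forall>b\<in>I. a + b \<in> I)
      \<and> (\<forall>r\<in>S. \<forall>a\<in>I. r * a \<in> I)"

definition gen_ideal :: "'a::comm_ring_1 set \<Rightarrow> 'a set \<Rightarrow> 'a set" where
  "gen_ideal S G = \<Inter>{I. ideal_in S I \<and> G \<subseteq> I}"

definition ideal_mult :: "'a::comm_ring_1 set \<Rightarrow> 'a set \<Rightarrow> 'a set \<Rightarrow> 'a set" where
  "ideal_mult S I J = gen_ideal S {a * b | a b. a \<in> I \<and> b \<in> J}"

fun ideal_pow :: "'a::comm_ring_1 set \<Rightarrow> 'a set \<Rightarrow> nat \<Rightarrow> 'a set" where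
  "ideal_pow S I 0 = S"
| "ideal_pow S I (Suc k) = ideal_mult S (ideal_pow S I k) I"

definition prime_ideal_in :: "'a::comm_ring_1 set \<Rightarrow> 'a set \<Rightarrow> bool" where
  "prime_ideal_in S P \<longleftrightarrow> ideal_in S P \<and> P \<noteq> S
      \<and> (\<forall>a\<in>S. \<forall>b\<in>S. a * b \<in> P \<longrightarrow> a \<in> P \<or> b \<in> P)"

definition colon :: "'a::comm_ring_1 set \<Rightarrow> 'a set \<Rightarrow> 'a \<Rightarrow> 'a set" where
  "colon S I f = {r \<in> S. r * f \<in> I}"

definition Ass :: "'a::comm_ring_1 set \<Rightarrow> 'a set \<Rightarrow> 'a set set" where
  "Ass S I = {P. prime_ideal_in S P \<and> (\<exists>f\<in>S. P = colon S I f)}"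

definition copersistent :: "'a::comm_ring_1 set \<Rightarrow> 'a set \<Rightarrow> bool" where
  "copersistent S I \<longleftrightarrow> (\<forall>k\<ge>1. Ass S (ideal_pow S I (Suc k)) \<subseteq> Ass S (ideal_pow S I k))"

definition monomial_ideal :: "nat set \<Rightarrow> ('a::comm_ring_1) mpoly set \<Rightarrow> bool" where
  "monomial_ideal V I \<longleftrightarrow> (\<exists>E. (\<forall>e\<in>E. Poly_Mapping.keys e \<subseteq> V) \<and> I = gen_ideal (polyring V) (mmonom ` E))"

definition min_monomial_gens :: "nat set \<Rightarrow> ('a::comm_ring_1) mpoly set \<Rightarrow> (nat \<Rightarrow>\<^sub>0 nat) set \<Rightarrow> bool" where
  "min_monomial_gens V I G \<longleftrightarrow> (\<forall>e\<in>G. Poly_Mapping.keys e \<subseteq> V) \<and> I = gen_ideal (polyring V) (mmonom ` G)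
      \<and> (\<forall>a\<in>G. \<forall>b\<in>G. mdvd a b \<longrightarrow> a = b)"

end

theory Submission
  imports Defs
begin

text \<open>Write S = K[x_i : i < s] and R = K[x_i : i < n] = S[x_i : s \<le> i < n], and expand every
f \<in> R in the upper variables as f = \<Sum>_d f_d x^d with coefficients f_d \<in> S; the extension
M R of an ideal M of S consists of the f with all f_d \<in> M.  Choosing monomials x^{e_i} \<in> J_i
and putting w = x^W with W = \<Sum>_i e_i, we get I w R \<subseteq> L \<subseteq> I R, and this sandwich already
forces (L^j : w^j) = I^j R for all j.  Extensions of primes are prime: compare the largest
coefficients outside P, for a linear order on exponents compatible with addition.  Hence
P = (I^j : f) implies P R = (L^j : f w^j), and conversely P R = (L^j : g) implies
P = \<Inter>_d (I^j : g_d), a finite intersection, so that P = (I^j : g_d) for some d by primality.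
Therefore a prime P \<in> Ass(I^{k+1}) - Ass(I^k) yields P R \<in> Ass(L^{k+1}) - Ass(L^k).\<close>

section \<open>Subrings and ideals\<close>

definition subring :: "'a::comm_ring_1 set \<Rightarrow> bool" where
  "subring S \<longleftrightarrow> 0 \<in> S \<and> 1 \<in> S \<and> (\<forall>a\<in>S. \<forall>b\<in>S. a + b \<in> S \<and> a * b \<in> S) \<and> (\<forall>a\<in>S. - a \<in> S)"

lemma
  assumes "subring S"
  shows subring_zero: "0 \<in> S" and subring_one: "1 \<in> S"
    and subring_add: "a \<in> S \<Longrightarrow> b \<in> S \<Longrightarrow> a + b \<in> S"
    and subring_mult: "a \<in> S \<Longrightarrow> b \<in> S \<Longrightarrow> a * b \<in> S"
    and subring_uminus: "a \<in> S \<Longrightarrow> - a \<in> S"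
  using assms by (simp_all add: subring_def)

lemma subring_prod: "subring S \<Longrightarrow> (\<And>x. x \<in> A \<Longrightarrow> f x \<in> S) \<Longrightarrow> prod f A \<in> S"
  by (induction A rule: infinite_finite_induct) (simp_all add: subring_one subring_mult)

lemma subring_polyring: "subring (polyring V :: 'a::comm_ring_1 mpoly set)"
proof -
  have mult: "p * q \<in> polyring V" if "p \<in> polyring V" "q \<in> polyring V" for p q :: "'a mpoly"
  proof -
    have "Poly_Mapping.keys e \<subseteq> V" if "e \<in> Poly_Mapping.keys (p * q)" for e
    proof -
      obtain a b where "e = a + b" "a \<in> Poly_Mapping.keys p" "b \<in> Poly_Mapping.keys q"
        using \<open>e \<in> Poly_Mapping.keys (p * q)\<close> keys_mult[of p q] by blast
      then show ?thesis
        using \<open>p \<in> polyring V\<close> \<open>q \<in> polyring V\<close> keys_add[of a b] unfolding polyring_def by blast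
    qed
    then show ?thesis unfolding polyring_def by blast
  qed
  moreover have "p + q \<in> polyring V" if "p \<in> polyring V" "q \<in> polyring V" for p q :: "'a mpoly"
    using that keys_add[of p q] unfolding polyring_def by blast
  moreover have "- p \<in> polyring V" if "p \<in> polyring V" for p :: "'a mpoly"
    using that by (simp add: polyring_def)
  moreover have "0 \<in> polyring V" "1 \<in> polyring V" by (simp_all add: polyring_def)
  ultimately show ?thesis unfolding subring_def by blast
qed

lemma polyring_mono: "V \<subseteq> V' \<Longrightarrow> polyring V \<subseteq> polyring V'"
  by (auto simp: polyring_def)

lemma single_in_polyring: "Poly_Mapping.keys e \<subseteq> V \<Longrightarrow> Poly_Mapping.single e c \<in> polyring V"
  by (simp add: polyring_def)

lemma mmonom_in_polyring: "Poly_Mapping.keys e \<subseteq> V \<Longrightarrow> mmonom e \<in> polyring V"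
  by (simp add: mmonom_def single_in_polyring)

lemma mmonom_mult: "mmonom a * mmonom b = mmonom (a + b)"
  by (simp add: mmonom_def mult_single)

lemma mmonom_power:
  "\<exists>c. (mmonom e :: 'a::comm_ring_1 mpoly) ^ j = mmonom c \<and> Poly_Mapping.keys c \<subseteq> Poly_Mapping.keys e"
proof (induction j)
  case 0
  show ?case by (intro exI[of _ 0]) (simp add: mmonom_def)
next
  case (Suc j)
  then obtain c where "(mmonom e :: 'a mpoly) ^ j = mmonom c" "Poly_Mapping.keys c \<subseteq> Poly_Mapping.keys e"
    by blast
  then show ?case using keys_add[of e c] by (intro exI[of _ "e + c"]) (auto simp: mmonom_mult)
qed

lemma ideal_in_subset: "ideal_in S I \<Longrightarrow> I \<subseteq> S"
  by (simp add: ideal_in_def)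

lemma ideal_in_zero: "ideal_in S I \<Longrightarrow> 0 \<in> I"
  by (simp add: ideal_in_def)

lemma ideal_in_add: "ideal_in S I \<Longrightarrow> a \<in> I \<Longrightarrow> b \<in> I \<Longrightarrow> a + b \<in> I"
  by (simp add: ideal_in_def)

lemma ideal_in_mult_left: "ideal_in S I \<Longrightarrow> r \<in> S \<Longrightarrow> a \<in> I \<Longrightarrow> r * a \<in> I"
  by (simp add: ideal_in_def)

lemma ideal_in_mult_right: "ideal_in S I \<Longrightarrow> r \<in> S \<Longrightarrow> a \<in> I \<Longrightarrow> a * r \<in> I"
  by (metis ideal_in_mult_left mult.commute)

lemma ideal_in_add_cancel:
  assumes "subring S" "ideal_in S I" "a + b \<in> I" "b \<in> I"
  shows "a \<in> I"
proof -
  have "(- 1) * b \<in> I"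
    using assms by (intro ideal_in_mult_left[of S]) (simp_all add: subring_one subring_uminus)
  then have "(a + b) + (- 1) * b \<in> I" by (rule ideal_in_add[OF assms(2,3)])
  then show ?thesis by simp
qed

lemma ideal_in_sum: "ideal_in S I \<Longrightarrow> (\<And>x. x \<in> A \<Longrightarrow> f x \<in> I) \<Longrightarrow> sum f A \<in> I"
  by (induction A rule: infinite_finite_induct) (simp_all add: ideal_in_zero ideal_in_add)

lemma subring_ideal_in_self: "subring S \<Longrightarrow> ideal_in S S"
  by (simp add: ideal_in_def subring_def)

lemma ideal_in_gen_ideal:
  assumes "subring S" "G \<subseteq> S"
  shows "ideal_in S (gen_ideal S G)"
proof -
  let ?F = "{I. ideal_in S I \<and> G \<subseteq> I}"
  have "S \<in> ?F" using assms subring_ideal_in_self by blast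
  then have "\<Inter> ?F \<subseteq> S" by blast
  moreover have "0 \<in> \<Inter> ?F" "\<forall>a\<in>\<Inter> ?F. \<forall>b\<in>\<Inter> ?F. a + b \<in> \<Inter> ?F"
    "\<forall>r\<in>S. \<forall>a\<in>\<Inter> ?F. r * a \<in> \<Inter> ?F"
    by (auto simp: ideal_in_def)
  ultimately show ?thesis unfolding gen_ideal_def ideal_in_def[of S "\<Inter> ?F"] by blast
qed

lemma gen_ideal_gens: "G \<subseteq> gen_ideal S G"
  by (auto simp: gen_ideal_def)

lemma gen_ideal_least: "ideal_in S I \<Longrightarrow> G \<subseteq> I \<Longrightarrow> gen_ideal S G \<subseteq> I"
  by (auto simp: gen_ideal_def)

lemma ideal_in_ideal_pow:
  assumes "subring S" "ideal_in S I"
  shows "ideal_in S (ideal_pow S I k)"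
proof (induction k)
  case 0
  then show ?case using assms by (simp add: subring_ideal_in_self)
next
  case (Suc k)
  have "a * b \<in> S" if "a \<in> ideal_pow S I k" "b \<in> I" for a b
  proof (rule subring_mult[OF assms(1)])
    show "a \<in> S" using that(1) ideal_in_subset[OF Suc] by blast
    show "b \<in> S" using that(2) ideal_in_subset[OF assms(2)] by blast
  qed
  then have "{a * b |a b. a \<in> ideal_pow S I k \<and> b \<in> I} \<subseteq> S" by blast
  then show ?case unfolding ideal_pow.simps ideal_mult_def by (rule ideal_in_gen_ideal[OF assms(1)])
qed

lemma ideal_pow_Suc_mult:
  assumes "a \<in> ideal_pow S I k" "b \<in> I"
  shows "a * b \<in> ideal_pow S I (Suc k)"
proof -
  have "a * b \<in> {a * b |a b. a \<in> ideal_pow S I k \<and> b \<in> I}" using assms by blast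
  then show ?thesis unfolding ideal_pow.simps ideal_mult_def by (rule subsetD[OF gen_ideal_gens])
qed

lemma ideal_pow_Suc_least:
  "ideal_in S B \<Longrightarrow> (\<And>a b. a \<in> ideal_pow S I k \<Longrightarrow> b \<in> I \<Longrightarrow> a * b \<in> B)
    \<Longrightarrow> ideal_pow S I (Suc k) \<subseteq> B"
  unfolding ideal_pow.simps ideal_mult_def by (rule gen_ideal_least) blast+

lemma ideal_in_colon:
  assumes "subring S'" "S' \<subseteq> S" "ideal_in S I"
  shows "ideal_in S' (colon S' I f)"
  using assms unfolding ideal_in_def colon_def
  by (auto simp: subring_zero subring_add subring_mult distrib_right mult.assoc)

lemma prime_ideal_in_one_notin:
  assumes "subring S" "prime_ideal_in S P"
  shows "1 \<notin> P"
proof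
  assume "1 \<in> P"
  then have "S \<subseteq> P" using assms(2) ideal_in_mult_right unfolding prime_ideal_in_def by fastforce
  then show False using assms(2) unfolding prime_ideal_in_def ideal_in_def by blast
qed

lemma prime_ideal_in_mult_iff:
  assumes "prime_ideal_in S P" "r \<in> S" "y \<in> S - P"
  shows "r * y \<in> P \<longleftrightarrow> r \<in> P"
  using assms ideal_in_mult_right unfolding prime_ideal_in_def by blast

lemma prime_ideal_in_prod_notin:
  assumes "subring S" "prime_ideal_in S P" "finite D" "\<And>d. d \<in> D \<Longrightarrow> a d \<in> S - P"
  shows "prod a D \<notin> P"
  using assms(3,4)
proof (induction D rule: finite_induct)
  case empty
  then show ?case using prime_ideal_in_one_notin[OF assms(1,2)] by simp
next
  case (insert x F)
  have "prod a F \<in> S" using insert(4) by (intro subring_prod[OF assms(1)]) blast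
  then show ?case using insert assms(2) unfolding prime_ideal_in_def by auto
qed

lemma prime_ideal_in_eq_finite_Inter:
  assumes "subring S" "prime_ideal_in S P" "finite D"
    and "\<And>d. d \<in> D \<Longrightarrow> ideal_in S (A d)"
    and "P = {r \<in> S. \<forall>d\<in>D. r \<in> A d}"
  shows "\<exists>d\<in>D. P = A d"
proof (rule ccontr)
  assume ne: "\<not> ?thesis"
  have "\<exists>x. x \<in> A d - P" if "d \<in> D" for d
  proof -
    have "P \<subseteq> A d" using assms(5) that by blast
    moreover have "P \<noteq> A d" using ne that by blast
    ultimately show ?thesis by blast
  qed
  then obtain a where a: "\<And>d. d \<in> D \<Longrightarrow> a d \<in> A d - P" by metis
  have aS: "a d \<in> S - P" if "d \<in> D" for d
    using a[OF that] ideal_in_subset[OF assms(4)[OF that]] by blast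
  have "prod a D \<in> A d" if "d \<in> D" for d
  proof -
    have "prod a D = a d * prod a (D - {d})" using that assms(3) by (simp add: prod.remove)
    moreover have "prod a (D - {d}) \<in> S" using aS by (intro subring_prod[OF assms(1)]) blast
    ultimately show ?thesis using ideal_in_mult_right[OF assms(4)[OF that]] a[OF that] by simp
  qed
  moreover have "prod a D \<in> S" using aS by (intro subring_prod[OF assms(1)]) blast
  moreover have "prod a D \<notin> P" by (rule prime_ideal_in_prod_notin[OF assms(1,2,3) aS])
  ultimately show False using assms(5) by blast
qed

section \<open>Coefficients with respect to the upper variables\<close>

definition lower_exp :: "nat \<Rightarrow> (nat \<Rightarrow>\<^sub>0 nat) \<Rightarrow> (nat \<Rightarrow>\<^sub>0 nat)" where
  "lower_exp s e = Abs_poly_mapping (\<lambda>i. if i < s then Poly_Mapping.lookup e i else 0)"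

definition upper_exp :: "nat \<Rightarrow> (nat \<Rightarrow>\<^sub>0 nat) \<Rightarrow> (nat \<Rightarrow>\<^sub>0 nat)" where
  "upper_exp s e = Abs_poly_mapping (\<lambda>i. if i < s then 0 else Poly_Mapping.lookup e i)"

lemma lookup_lower_exp:
  "Poly_Mapping.lookup (lower_exp s e) i = (if i < s then Poly_Mapping.lookup e i else 0)"
proof -
  have "finite {i. (if i < s then Poly_Mapping.lookup e i else 0) \<noteq> 0}"
    by (rule finite_subset[of _ "Poly_Mapping.keys e"]) (auto simp: in_keys_iff)
  then show ?thesis unfolding lower_exp_def by simp
qed

lemma lookup_upper_exp:
  "Poly_Mapping.lookup (upper_exp s e) i = (if i < s then 0 else Poly_Mapping.lookup e i)"
proof -
  have "finite {i. (if i < s then 0 else Poly_Mapping.lookup e i) \<noteq> 0}"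
    by (rule finite_subset[of _ "Poly_Mapping.keys e"]) (auto simp: in_keys_iff)
  then show ?thesis unfolding upper_exp_def by simp
qed

lemma lower_exp_add: "lower_exp s (a + b) = lower_exp s a + lower_exp s b"
  by (rule poly_mapping_eqI) (simp add: lookup_lower_exp lookup_add)

lemma upper_exp_add: "upper_exp s (a + b) = upper_exp s a + upper_exp s b"
  by (rule poly_mapping_eqI) (simp add: lookup_upper_exp lookup_add)

lemma lower_plus_upper_exp: "lower_exp s e + upper_exp s e = e"
  by (rule poly_mapping_eqI) (simp add: lookup_upper_exp lookup_lower_exp lookup_add)

lemma keys_lower_exp: "Poly_Mapping.keys (lower_exp s e) \<subseteq> {..<s}"
  by (auto simp: in_keys_iff lookup_lower_exp split: if_splits)

lemma keys_upper_exp: "Poly_Mapping.keys (upper_exp s e) \<subseteq> Poly_Mapping.keys e"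
  by (auto simp: in_keys_iff lookup_upper_exp split: if_splits)

lemma lower_exp_eq_self: "Poly_Mapping.keys e \<subseteq> {..<s} \<Longrightarrow> lower_exp s e = e"
  by (rule poly_mapping_eqI) (auto simp: lookup_lower_exp in_keys_iff)

lemma upper_exp_eq_0: "Poly_Mapping.keys e \<subseteq> {..<s} \<Longrightarrow> upper_exp s e = 0"
  by (rule poly_mapping_eqI) (auto simp: lookup_upper_exp in_keys_iff)

lemma lower_exp_eq_0: "Poly_Mapping.keys e \<subseteq> {s..} \<Longrightarrow> lower_exp s e = 0"
  by (rule poly_mapping_eqI) (auto simp: lookup_lower_exp in_keys_iff)

lemma upper_exp_eq_self: "Poly_Mapping.keys e \<subseteq> {s..} \<Longrightarrow> upper_exp s e = e"
  by (rule poly_mapping_eqI) (auto simp: lookup_upper_exp in_keys_iff)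

lemma poly_mapping_sum_single:
  "(p :: 'k \<Rightarrow>\<^sub>0 'b::comm_monoid_add)
     = (\<Sum>e\<in>Poly_Mapping.keys p. Poly_Mapping.single e (Poly_Mapping.lookup p e))"
proof (rule poly_mapping_eqI)
  fix x
  have "Poly_Mapping.lookup (\<Sum>e\<in>Poly_Mapping.keys p. Poly_Mapping.single e (Poly_Mapping.lookup p e)) x
     = (\<Sum>e\<in>Poly_Mapping.keys p. if e = x then Poly_Mapping.lookup p e else 0)"
    by (simp add: lookup_sum lookup_single when_def)
  also have "\<dots> = Poly_Mapping.lookup p x"
    by (simp add: in_keys_iff)
  finally show "Poly_Mapping.lookup p x
      = Poly_Mapping.lookup (\<Sum>e\<in>Poly_Mapping.keys p. Poly_Mapping.single e (Poly_Mapping.lookup p e)) x"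
    by simp
qed

lemma mult_eq_sum_single:
  "(p::'a::comm_ring_1 mpoly) * q = (\<Sum>a\<in>Poly_Mapping.keys p. \<Sum>b\<in>Poly_Mapping.keys q.
      Poly_Mapping.single (a + b) (Poly_Mapping.lookup p a * Poly_Mapping.lookup q b))"
proof -
  have "p * q = (\<Sum>a\<in>Poly_Mapping.keys p. Poly_Mapping.single a (Poly_Mapping.lookup p a)) *
                (\<Sum>b\<in>Poly_Mapping.keys q. Poly_Mapping.single b (Poly_Mapping.lookup q b))"
    using poly_mapping_sum_single[of p] poly_mapping_sum_single[of q] by simp
  then show ?thesis by (simp add: sum_product mult_single)
qed

definition map_exps :: "((nat \<Rightarrow>\<^sub>0 nat) \<Rightarrow> (nat \<Rightarrow>\<^sub>0 nat)) \<Rightarrow> 'a::comm_ring_1 mpoly \<Rightarrow> 'a mpoly" where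
  "map_exps h p = (\<Sum>e\<in>Poly_Mapping.keys p. Poly_Mapping.single (h e) (Poly_Mapping.lookup p e))"

lemma map_exps_add: "map_exps h (p + q) = map_exps h p + map_exps h q"
  unfolding map_exps_def by (rule setsum_keys_plus_distrib) (simp_all add: single_add)

lemma map_exps_0 [simp]: "map_exps h 0 = 0"
  by (simp add: map_exps_def)

lemma map_exps_single: "map_exps h (Poly_Mapping.single e c) = Poly_Mapping.single (h e) c"
  by (simp add: map_exps_def)

lemma map_exps_sum: "map_exps h (sum f A) = (\<Sum>x\<in>A. map_exps h (f x))"
  by (induction A rule: infinite_finite_induct) (simp_all add: map_exps_add)

lemma map_exps_mult:
  assumes "\<And>a b. h (a + b) = h a + h b"
  shows "map_exps h (p * q) = map_exps h p * map_exps h q"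
proof -
  have "map_exps h (p * q) = (\<Sum>a\<in>Poly_Mapping.keys p. \<Sum>b\<in>Poly_Mapping.keys q.
      Poly_Mapping.single (h a) (Poly_Mapping.lookup p a) * Poly_Mapping.single (h b) (Poly_Mapping.lookup q b))"
    by (simp add: mult_eq_sum_single[of p q] map_exps_sum map_exps_single assms mult_single)
  then show ?thesis by (simp add: map_exps_def sum_product)
qed

lemma keys_map_exps: "Poly_Mapping.keys (map_exps h p) \<subseteq> h ` Poly_Mapping.keys p"
proof -
  have "Poly_Mapping.keys (map_exps h p) \<subseteq> (\<Union>e\<in>Poly_Mapping.keys p.
      Poly_Mapping.keys (Poly_Mapping.single (h e) (Poly_Mapping.lookup p e)))"
    unfolding map_exps_def by (rule keys_sum)
  then show ?thesis by auto
qed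

lemma map_exps_id_on: "(\<And>e. e \<in> Poly_Mapping.keys p \<Longrightarrow> h e = e) \<Longrightarrow> map_exps h p = p"
  unfolding map_exps_def by (subst (2) poly_mapping_sum_single[of p]) (rule sum.cong, auto)

definition upper_to_one :: "nat \<Rightarrow> 'a::comm_ring_1 mpoly \<Rightarrow> 'a mpoly" where
  "upper_to_one s = map_exps (lower_exp s)"

definition upper_component :: "nat \<Rightarrow> (nat \<Rightarrow>\<^sub>0 nat) \<Rightarrow> 'a::comm_ring_1 mpoly \<Rightarrow> 'a mpoly" where
  "upper_component s d p = Abs_poly_mapping (\<lambda>e. if upper_exp s e = d then Poly_Mapping.lookup p e else 0)"

definition upper_degs :: "nat \<Rightarrow> 'a::comm_ring_1 mpoly \<Rightarrow> (nat \<Rightarrow>\<^sub>0 nat) set" where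
  "upper_degs s p = upper_exp s ` Poly_Mapping.keys p"

definition upper_coeff :: "nat \<Rightarrow> (nat \<Rightarrow>\<^sub>0 nat) \<Rightarrow> 'a::comm_ring_1 mpoly \<Rightarrow> 'a mpoly" where
  "upper_coeff s d p = upper_to_one s (upper_component s d p)"

lemma finite_upper_degs [simp]: "finite (upper_degs s p)"
  by (simp add: upper_degs_def)

lemma keys_upper_degs: "p \<in> polyring V \<Longrightarrow> d \<in> upper_degs s p \<Longrightarrow> Poly_Mapping.keys d \<subseteq> V"
  unfolding polyring_def upper_degs_def using keys_upper_exp by blast

lemma upper_to_one_0 [simp]: "upper_to_one s 0 = 0"
  by (simp add: upper_to_one_def)

lemma upper_to_one_add: "upper_to_one s (p + q) = upper_to_one s p + upper_to_one s q"
  by (simp add: upper_to_one_def map_exps_add)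

lemma upper_to_one_mult: "upper_to_one s (p * q) = upper_to_one s p * upper_to_one s q"
  unfolding upper_to_one_def by (rule map_exps_mult) (rule lower_exp_add)

lemma upper_to_one_sum: "upper_to_one s (sum f A) = (\<Sum>x\<in>A. upper_to_one s (f x))"
  by (simp add: upper_to_one_def map_exps_sum)

lemma upper_to_one_in_polyring: "upper_to_one s p \<in> polyring {..<s}"
  unfolding polyring_def upper_to_one_def using keys_map_exps[of "lower_exp s" p] keys_lower_exp by blast

lemma upper_to_one_eq_self: "p \<in> polyring {..<s} \<Longrightarrow> upper_to_one s p = p"
  unfolding upper_to_one_def polyring_def by (rule map_exps_id_on) (simp add: lower_exp_eq_self)

lemma upper_to_one_mmonom: "Poly_Mapping.keys c \<subseteq> {s..} \<Longrightarrow> upper_to_one s (mmonom c) = 1"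
  by (simp add: upper_to_one_def mmonom_def map_exps_single lower_exp_eq_0)

lemma lookup_upper_component:
  "Poly_Mapping.lookup (upper_component s d p) e = (if upper_exp s e = d then Poly_Mapping.lookup p e else 0)"
proof -
  have "finite {e. (if upper_exp s e = d then Poly_Mapping.lookup p e else 0) \<noteq> 0}"
    by (rule finite_subset[of _ "Poly_Mapping.keys p"]) (auto simp: in_keys_iff)
  then show ?thesis unfolding upper_component_def by simp
qed

lemma upper_component_add:
  "upper_component s d (p + q) = upper_component s d p + upper_component s d q"
  by (rule poly_mapping_eqI) (simp add: lookup_upper_component lookup_add)

lemma upper_component_0 [simp]: "upper_component s d 0 = 0"
  by (rule poly_mapping_eqI) (simp add: lookup_upper_component)

lemma upper_component_sum: "upper_component s d (sum f A) = (\<Sum>x\<in>A. upper_component s d (f x))"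
  by (induction A rule: infinite_finite_induct) (simp_all add: upper_component_add)

lemma keys_upper_component:
  "Poly_Mapping.keys (upper_component s d p) = {e \<in> Poly_Mapping.keys p. upper_exp s e = d}"
  by (auto simp: in_keys_iff lookup_upper_component split: if_splits)

lemma upper_component_eq_self:
  "(\<And>e. e \<in> Poly_Mapping.keys p \<Longrightarrow> upper_exp s e = d) \<Longrightarrow> upper_component s d p = p"
  by (rule poly_mapping_eqI) (auto simp: lookup_upper_component in_keys_iff)

lemma upper_component_eq_0:
  "(\<And>e. e \<in> Poly_Mapping.keys p \<Longrightarrow> upper_exp s e \<noteq> d) \<Longrightarrow> upper_component s d p = 0"
  by (rule poly_mapping_eqI) (auto simp: lookup_upper_component in_keys_iff)

lemma upper_component_notin: "d \<notin> upper_degs s p \<Longrightarrow> upper_component s d p = 0"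
  by (rule upper_component_eq_0) (auto simp: upper_degs_def)

lemma sum_upper_component: "(\<Sum>d\<in>upper_degs s p. upper_component s d p) = p"
proof (rule poly_mapping_eqI)
  fix e
  have "Poly_Mapping.lookup (\<Sum>d\<in>upper_degs s p. upper_component s d p) e
       = (\<Sum>d\<in>upper_degs s p. if upper_exp s e = d then Poly_Mapping.lookup p e else 0)"
    by (simp add: lookup_sum lookup_upper_component)
  also have "\<dots> = Poly_Mapping.lookup p e"
    by (auto simp: upper_degs_def in_keys_iff)
  finally show "Poly_Mapping.lookup (\<Sum>d\<in>upper_degs s p. upper_component s d p) e = Poly_Mapping.lookup p e" .
qed

lemma upper_component_mult_homog:
  assumes "\<And>e. e \<in> Poly_Mapping.keys p \<Longrightarrow> upper_exp s e = d1"
    and "\<And>e. e \<in> Poly_Mapping.keys q \<Longrightarrow> upper_exp s e = d2"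
  shows "upper_component s d (p * q) = (if d1 + d2 = d then p * q else 0)"
proof -
  have "upper_exp s e = d1 + d2" if e: "e \<in> Poly_Mapping.keys (p * q)" for e
  proof -
    obtain a b where "e = a + b" "a \<in> Poly_Mapping.keys p" "b \<in> Poly_Mapping.keys q"
      using keys_mult[of p q] e by blast
    then show ?thesis using assms by (simp add: upper_exp_add)
  qed
  then show ?thesis by (auto intro: upper_component_eq_self upper_component_eq_0)
qed

lemma upper_component_mult:
  "upper_component s d (p * q) = (\<Sum>d1\<in>upper_degs s p. \<Sum>d2\<in>upper_degs s q.
      if d1 + d2 = d then upper_component s d1 p * upper_component s d2 q else 0)"
proof -
  have "p * q = (\<Sum>d1\<in>upper_degs s p. upper_component s d1 p) * (\<Sum>d2\<in>upper_degs s q. upper_component s d2 q)"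
    by (simp only: sum_upper_component)
  also have "\<dots> = (\<Sum>d1\<in>upper_degs s p. \<Sum>d2\<in>upper_degs s q. upper_component s d1 p * upper_component s d2 q)"
    by (rule sum_product)
  finally have pq: "p * q = \<dots>" .
  show ?thesis
    unfolding pq upper_component_sum
    by (intro sum.cong refl upper_component_mult_homog) (simp_all add: keys_upper_component)
qed

lemma upper_component_mult_upper_homog:
  assumes "\<And>e. e \<in> Poly_Mapping.keys f \<Longrightarrow> upper_exp s e = c"
  shows "upper_component s (d + c) (p * f) = upper_component s d p * f"
proof -
  have "p * f = (\<Sum>d1\<in>upper_degs s p. upper_component s d1 p) * f"
    by (simp only: sum_upper_component)
  then have "upper_component s (d + c) (p * f)
      = (\<Sum>d1\<in>upper_degs s p. upper_component s (d + c) (upper_component s d1 p * f))"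
    by (simp only: sum_distrib_right upper_component_sum)
  also have "\<dots> = (\<Sum>d1\<in>upper_degs s p. if d1 = d then upper_component s d1 p * f else 0)"
  proof (rule sum.cong)
    fix d1
    have "upper_component s (d + c) (upper_component s d1 p * f)
        = (if d1 + c = d + c then upper_component s d1 p * f else 0)"
      using assms by (intro upper_component_mult_homog) (simp_all add: keys_upper_component)
    then show "upper_component s (d + c) (upper_component s d1 p * f)
        = (if d1 = d then upper_component s d1 p * f else 0)" by simp
  qed simp
  also have "\<dots> = upper_component s d p * f"
    by (simp add: upper_component_notin)
  finally show ?thesis .
qed

lemma upper_coeff_0 [simp]: "upper_coeff s d 0 = 0"
  by (simp add: upper_coeff_def)

lemma upper_coeff_add: "upper_coeff s d (p + q) = upper_coeff s d p + upper_coeff s d q"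
  by (simp add: upper_coeff_def upper_component_add upper_to_one_add)

lemma upper_coeff_in_polyring: "upper_coeff s d p \<in> polyring {..<s}"
  by (simp add: upper_coeff_def upper_to_one_in_polyring)

lemma upper_coeff_notin: "d \<notin> upper_degs s p \<Longrightarrow> upper_coeff s d p = 0"
  by (simp add: upper_coeff_def upper_component_notin)

lemma upper_coeff_mult:
  "upper_coeff s d (p * q) = (\<Sum>d1\<in>upper_degs s p. \<Sum>d2\<in>upper_degs s q.
      if d1 + d2 = d then upper_coeff s d1 p * upper_coeff s d2 q else 0)"
  unfolding upper_coeff_def upper_component_mult
  by (simp add: upper_to_one_sum if_distrib[of "upper_to_one s"] upper_to_one_mult cong: if_cong)

lemma upper_coeff_lower:
  assumes "r \<in> polyring {..<s}"
  shows "upper_coeff s d r = (if d = 0 then r else 0)"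
proof -
  have "upper_exp s e = 0" if "e \<in> Poly_Mapping.keys r" for e
    using assms that by (auto simp: polyring_def upper_exp_eq_0)
  then have "upper_component s d r = (if d = 0 then r else 0)"
    by (auto intro: upper_component_eq_self upper_component_eq_0)
  then show ?thesis using assms by (simp add: upper_coeff_def upper_to_one_eq_self)
qed

lemma upper_coeff_1: "upper_coeff s d (1 :: 'a::comm_ring_1 mpoly) = (if d = 0 then 1 else 0)"
  by (simp add: upper_coeff_lower subring_one[OF subring_polyring])

lemma upper_coeff_mult_lower:
  assumes "r \<in> polyring {..<s}"
  shows "upper_coeff s d (p * r) = upper_coeff s d p * r"
proof -
  have "upper_component s (d + 0) (p * r) = upper_component s d p * r"
    using assms by (intro upper_component_mult_upper_homog) (auto simp: polyring_def upper_exp_eq_0)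
  then show ?thesis using assms by (simp add: upper_coeff_def upper_to_one_mult upper_to_one_eq_self)
qed

lemma upper_coeff_mult_upper_mmonom:
  assumes "Poly_Mapping.keys c \<subseteq> {s..}"
  shows "upper_coeff s (d + c) (p * mmonom c) = upper_coeff s d p"
proof -
  have "upper_component s (d + c) (p * mmonom c) = upper_component s d p * mmonom c"
    using assms by (intro upper_component_mult_upper_homog) (simp add: mmonom_def upper_exp_eq_self)
  then show ?thesis using assms by (simp add: upper_coeff_def upper_to_one_mult upper_to_one_mmonom)
qed

lemma upper_coeff_mmonom:
  "Poly_Mapping.keys c \<subseteq> {s..} \<Longrightarrow> upper_coeff s c (mmonom c :: 'a::comm_ring_1 mpoly) = 1"
  using upper_coeff_mult_upper_mmonom[of c s 0 "1 :: 'a mpoly"] by (simp add: upper_coeff_1)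

lemma upper_coeff_expansion: "p = (\<Sum>d\<in>upper_degs s p. upper_coeff s d p * mmonom d)"
proof -
  have "upper_coeff s d p * mmonom d = upper_component s d p" for d
  proof -
    have "upper_coeff s d p * mmonom d
        = (\<Sum>e\<in>Poly_Mapping.keys (upper_component s d p).
             Poly_Mapping.single (lower_exp s e + d) (Poly_Mapping.lookup (upper_component s d p) e))"
      by (simp add: upper_coeff_def upper_to_one_def map_exps_def mmonom_def sum_distrib_right mult_single)
    also have "\<dots> = upper_component s d p"
      by (subst (2) poly_mapping_sum_single, rule sum.cong)
        (auto simp: keys_upper_component lower_plus_upper_exp)
    finally show ?thesis .
  qed
  then show ?thesis by (simp add: sum_upper_component)
qed

section \<open>Extended ideals\<close>

definition extended_ideal :: "nat set \<Rightarrow> nat \<Rightarrow> 'a::comm_ring_1 mpoly set \<Rightarrow> 'a mpoly set" where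
  "extended_ideal V s M = {p \<in> polyring V. \<forall>d. upper_coeff s d p \<in> M}"

lemma ideal_in_extended_ideal:
  assumes M: "ideal_in (polyring {..<s}) M"
  shows "ideal_in (polyring V) (extended_ideal V s M)"
  unfolding ideal_in_def[of _ "extended_ideal V s M"]
proof (intro conjI ballI)
  show "extended_ideal V s M \<subseteq> polyring V" by (auto simp: extended_ideal_def)
  show "0 \<in> extended_ideal V s M"
    using ideal_in_zero[OF M] by (simp add: extended_ideal_def subring_zero[OF subring_polyring])
  fix a b assume "a \<in> extended_ideal V s M" "b \<in> extended_ideal V s M"
  then show "a + b \<in> extended_ideal V s M"
    using ideal_in_add[OF M] by (simp add: extended_ideal_def subring_add[OF subring_polyring] upper_coeff_add)
next
  fix r a :: "'a mpoly" assume r: "r \<in> polyring V" and a: "a \<in> extended_ideal V s M"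
  have "upper_coeff s d (r * a) \<in> M" for d
    unfolding upper_coeff_mult
    using a ideal_in_zero[OF M] ideal_in_mult_left[OF M upper_coeff_in_polyring]
    by (intro ideal_in_sum[OF M]) (simp add: extended_ideal_def)
  then show "r * a \<in> extended_ideal V s M"
    using r a by (simp add: extended_ideal_def subring_mult[OF subring_polyring])
qed

lemma ideal_pow_subset_extended_ideal:
  assumes M: "ideal_in (polyring {..<s}) M" and L: "L \<subseteq> extended_ideal V s M"
  shows "ideal_pow (polyring V) L j \<subseteq> extended_ideal V s (ideal_pow (polyring {..<s}) M j)"
proof (induction j)
  case 0
  show ?case by (simp add: extended_ideal_def upper_coeff_in_polyring)
next
  case (Suc j)
  have Mj: "ideal_in (polyring {..<s}) (ideal_pow (polyring {..<s}) M (Suc j))"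
    by (rule ideal_in_ideal_pow[OF subring_polyring M])
  show ?case
  proof (rule ideal_pow_Suc_least[OF ideal_in_extended_ideal[OF Mj]])
    fix a b assume "a \<in> ideal_pow (polyring V) L j" and "b \<in> L"
    then have a: "a \<in> extended_ideal V s (ideal_pow (polyring {..<s}) M j)"
      and b: "b \<in> extended_ideal V s M"
      using Suc L by blast+
    have "upper_coeff s d1 a * upper_coeff s d2 b \<in> ideal_pow (polyring {..<s}) M (Suc j)" for d1 d2
      using a b by (intro ideal_pow_Suc_mult) (simp_all add: extended_ideal_def)
    then have "upper_coeff s d (a * b) \<in> ideal_pow (polyring {..<s}) M (Suc j)" for d
      unfolding upper_coeff_mult using ideal_in_zero[OF Mj]
      by (intro ideal_in_sum[OF Mj]) (simp del: ideal_pow.simps)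
    moreover have "a * b \<in> polyring V"
      using a b by (simp add: extended_ideal_def subring_mult[OF subring_polyring])
    ultimately show "a * b \<in> extended_ideal V s (ideal_pow (polyring {..<s}) M (Suc j))"
      by (simp add: extended_ideal_def del: ideal_pow.simps)
  qed
qed

lemma mult_lower_mem_extended_ideal_iff:
  assumes "r \<in> polyring {..<s}" "r \<in> polyring V" "p \<in> polyring V"
  shows "p * r \<in> extended_ideal V s M \<longleftrightarrow> (\<forall>d. upper_coeff s d p * r \<in> M)"
  using assms by (simp add: extended_ideal_def upper_coeff_mult_lower subring_mult[OF subring_polyring])

lemma lower_mem_extended_ideal_iff:
  assumes "r \<in> polyring {..<s}" "r \<in> polyring V" "0 \<in> M"
  shows "r \<in> extended_ideal V s M \<longleftrightarrow> r \<in> M"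
  using assms by (auto simp: extended_ideal_def upper_coeff_lower)

lemma exists_top_upper_coeff_notin:
  assumes "0 \<in> P" "p \<in> polyring V" "p \<notin> extended_ideal V s P"
  shows "\<exists>b\<in>upper_degs s p. upper_coeff s b p \<notin> P \<and> (\<forall>d>b. upper_coeff s d p \<in> P)"
proof -
  define B where "B = {d \<in> upper_degs s p. upper_coeff s d p \<notin> P}"
  have in_B: "d \<in> B" if "upper_coeff s d p \<notin> P" for d
  proof -
    have "d \<in> upper_degs s p"
    proof (rule ccontr)
      assume "d \<notin> upper_degs s p"
      then have "upper_coeff s d p = 0" by (rule upper_coeff_notin)
      then show False using that assms(1) by simp
    qed
    then show ?thesis using that unfolding B_def by blast
  qed
  have "finite B" by (simp add: B_def)
  moreover obtain d where "upper_coeff s d p \<notin> P" using assms(2,3) by (auto simp: extended_ideal_def)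
  ultimately have "Max B \<in> B" using in_B by (intro Max_in) auto
  moreover have "upper_coeff s d p \<in> P" if "Max B < d" for d
  proof (rule ccontr)
    assume "upper_coeff s d p \<notin> P"
    then have "d \<le> Max B" using in_B \<open>finite B\<close> by (intro Max_ge)
    then show False using that by simp
  qed
  ultimately show ?thesis unfolding B_def by blast
qed

lemma upper_coeff_mult_top:
  assumes P: "ideal_in (polyring {..<s}) P"
    and b1: "b1 \<in> upper_degs s p" and above1: "\<forall>d>b1. upper_coeff s d p \<in> P"
    and b2: "b2 \<in> upper_degs s q" and above2: "\<forall>d>b2. upper_coeff s d q \<in> P"
  shows "\<exists>r\<in>P. upper_coeff s (b1 + b2) (p * q) = upper_coeff s b1 p * upper_coeff s b2 q + r"
proof -
  define g where "g = (\<lambda>(d1, d2). if d1 + d2 = b1 + b2 then upper_coeff s d1 p * upper_coeff s d2 q else 0)"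
  have "upper_coeff s (b1 + b2) (p * q) = (\<Sum>x\<in>upper_degs s p \<times> upper_degs s q. g x)"
    unfolding upper_coeff_mult g_def by (simp add: sum.cartesian_product)
  also have "\<dots> = g (b1, b2) + (\<Sum>x\<in>upper_degs s p \<times> upper_degs s q - {(b1, b2)}. g x)"
    using b1 b2 by (intro sum.remove) auto
  finally have split: "upper_coeff s (b1 + b2) (p * q)
      = upper_coeff s b1 p * upper_coeff s b2 q + (\<Sum>x\<in>upper_degs s p \<times> upper_degs s q - {(b1, b2)}. g x)"
    by (simp add: g_def)
  have g_mem: "g (d1, d2) \<in> P" if "(d1, d2) \<noteq> (b1, b2)" for d1 d2
  proof (cases "d1 + d2 = b1 + b2")
    case True
    have "b1 < d1 \<or> b2 < d2"
    proof (rule ccontr)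
      assume "\<not> (b1 < d1 \<or> b2 < d2)"
      then have "d1 \<le> b1" "d2 \<le> b2" by auto
      then have "d1 + d2 < b1 + b2"
        using that by (metis add_le_less_mono add_less_le_mono add_right_cancel order_le_less)
      then show False using True by simp
    qed
    then show ?thesis
    proof
      assume "b1 < d1"
      then have "upper_coeff s d1 p \<in> P" using above1 by blast
      then show ?thesis using True by (simp add: g_def ideal_in_mult_right[OF P upper_coeff_in_polyring])
    next
      assume "b2 < d2"
      then have "upper_coeff s d2 q \<in> P" using above2 by blast
      then show ?thesis using True by (simp add: g_def ideal_in_mult_left[OF P upper_coeff_in_polyring])
    qed
  qed (simp add: g_def ideal_in_zero[OF P])
  have "(\<Sum>x\<in>upper_degs s p \<times> upper_degs s q - {(b1, b2)}. g x) \<in> P"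
  proof (rule ideal_in_sum[OF P])
    fix x assume "x \<in> upper_degs s p \<times> upper_degs s q - {(b1, b2)}"
    then show "g x \<in> P" using g_mem by (cases x) blast
  qed
  then show ?thesis unfolding split by blast
qed

lemma prime_ideal_in_extended_ideal:
  assumes P: "prime_ideal_in (polyring {..<s}) P"
  shows "prime_ideal_in (polyring V) (extended_ideal V s P)"
proof -
  have Pid: "ideal_in (polyring {..<s}) P" using P by (simp add: prime_ideal_in_def)
  have "1 \<notin> extended_ideal V s P"
    using prime_ideal_in_one_notin[OF subring_polyring P] by (auto simp: extended_ideal_def upper_coeff_1)
  then have proper: "extended_ideal V s P \<noteq> polyring V" using subring_one[OF subring_polyring] by blast
  have "p \<in> extended_ideal V s P \<or> q \<in> extended_ideal V s P"
    if p: "p \<in> polyring V" and q: "q \<in> polyring V" and pq: "p * q \<in> extended_ideal V s P" for p q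
  proof (rule ccontr)
    assume "\<not> ?thesis"
    then have p_notin: "p \<notin> extended_ideal V s P" and q_notin: "q \<notin> extended_ideal V s P" by auto
    obtain b1 where b1: "b1 \<in> upper_degs s p" "upper_coeff s b1 p \<notin> P" "\<forall>d>b1. upper_coeff s d p \<in> P"
      using exists_top_upper_coeff_notin[OF ideal_in_zero[OF Pid] p p_notin] by blast
    obtain b2 where b2: "b2 \<in> upper_degs s q" "upper_coeff s b2 q \<notin> P" "\<forall>d>b2. upper_coeff s d q \<in> P"
      using exists_top_upper_coeff_notin[OF ideal_in_zero[OF Pid] q q_notin] by blast
    obtain r where "r \<in> P" and r: "upper_coeff s (b1 + b2) (p * q) = upper_coeff s b1 p * upper_coeff s b2 q + r"
      using upper_coeff_mult_top[OF Pid b1(1,3) b2(1,3)] by blast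
    have "upper_coeff s (b1 + b2) (p * q) \<in> P" using pq by (simp add: extended_ideal_def)
    then have "upper_coeff s b1 p * upper_coeff s b2 q + r \<in> P" by (simp only: r)
    then have "upper_coeff s b1 p * upper_coeff s b2 q \<in> P"
      using \<open>r \<in> P\<close> by (rule ideal_in_add_cancel[OF subring_polyring Pid])
    then show False using P b1(2) b2(2) upper_coeff_in_polyring unfolding prime_ideal_in_def by blast
  qed
  then show ?thesis using ideal_in_extended_ideal[OF Pid] proper by (simp add: prime_ideal_in_def)
qed

section \<open>Ideals between I w R and I R\<close>

locale sandwiched_ideal =
  fixes s n :: nat and I L :: "'a::comm_ring_1 mpoly set" and W :: "nat \<Rightarrow>\<^sub>0 nat"
  assumes s_le_n: "s \<le> n"
    and ideal_I: "ideal_in (polyring {..<s}) I"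
    and ideal_L: "ideal_in (polyring {..<n}) L"
    and keys_W: "Poly_Mapping.keys W \<subseteq> {s..<n}"
    and mult_mmonom_W_mem: "\<And>b. b \<in> I \<Longrightarrow> b * mmonom W \<in> L"
    and subset_extended_ideal: "L \<subseteq> extended_ideal {..<n} s I"
begin

abbreviation "S \<equiv> polyring {..<s} :: 'a mpoly set"
abbreviation "R \<equiv> polyring {..<n} :: 'a mpoly set"
abbreviation "w \<equiv> mmonom W :: 'a mpoly"

lemma S_subset_R: "S \<subseteq> R"
  using s_le_n by (intro polyring_mono) auto

lemma w_power_mmonom: obtains c where "w ^ j = mmonom c" "Poly_Mapping.keys c \<subseteq> {s..<n}"
  using mmonom_power[of W j] keys_W by blast

lemma w_power_in_R: "w ^ j \<in> R"
proof -
  obtain c where c: "w ^ j = mmonom c" "Poly_Mapping.keys c \<subseteq> {s..<n}" by (rule w_power_mmonom)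
  then have "Poly_Mapping.keys c \<subseteq> {..<n}" by auto
  then show ?thesis unfolding c(1) by (rule mmonom_in_polyring)
qed

lemma ideal_pow_mult_w_power:
  "g \<in> ideal_pow S I j \<Longrightarrow> g * w ^ j \<in> ideal_pow R L j"
proof (induction j arbitrary: g)
  case 0
  then show ?case using S_subset_R by auto
next
  case (Suc j)
  let ?C = "colon S (ideal_pow R L (Suc j)) (w ^ Suc j)"
  have "ideal_pow S I (Suc j) \<subseteq> ?C"
  proof (rule ideal_pow_Suc_least)
    show "ideal_in S ?C"
      by (rule ideal_in_colon[OF subring_polyring S_subset_R ideal_in_ideal_pow[OF subring_polyring ideal_L]])
    fix a b assume a: "a \<in> ideal_pow S I j" and b: "b \<in> I"
    have "(a * w ^ j) * (b * w) \<in> ideal_pow R L (Suc j)"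
      by (rule ideal_pow_Suc_mult[OF Suc.IH[OF a] mult_mmonom_W_mem[OF b]])
    moreover have "a * b * w ^ Suc j = (a * w ^ j) * (b * w)"
      by (simp add: power_Suc2 mult_ac)
    moreover have "a \<in> S" "b \<in> S"
      using a b ideal_in_subset[OF ideal_in_ideal_pow[OF subring_polyring ideal_I]] ideal_in_subset[OF ideal_I]
      by blast+
    ultimately show "a * b \<in> ?C" by (simp add: colon_def subring_mult[OF subring_polyring] del: power_Suc)
  qed
  then show ?case using Suc.prems unfolding colon_def by blast
qed

lemma mult_w_power_mem_ideal_pow_iff:
  assumes p: "p \<in> R"
  shows "p * w ^ j \<in> ideal_pow R L j \<longleftrightarrow> p \<in> extended_ideal {..<n} s (ideal_pow S I j)"
proof
  obtain c where c: "w ^ j = mmonom c" "Poly_Mapping.keys c \<subseteq> {s..<n}" by (rule w_power_mmonom)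
  assume "p * w ^ j \<in> ideal_pow R L j"
  then have "p * mmonom c \<in> ideal_pow R L j" by (simp only: c(1))
  then have "p * mmonom c \<in> extended_ideal {..<n} s (ideal_pow S I j)"
    using ideal_pow_subset_extended_ideal[OF ideal_I subset_extended_ideal] by blast
  then have "upper_coeff s (d + c) (p * mmonom c) \<in> ideal_pow S I j" for d
    by (simp add: extended_ideal_def)
  moreover have "upper_coeff s (d + c) (p * mmonom c) = upper_coeff s d p" for d
    using c(2) by (intro upper_coeff_mult_upper_mmonom) auto
  ultimately show "p \<in> extended_ideal {..<n} s (ideal_pow S I j)"
    using p by (simp add: extended_ideal_def)
next
  assume p_mem: "p \<in> extended_ideal {..<n} s (ideal_pow S I j)"
  have "p * w ^ j = (\<Sum>d\<in>upper_degs s p. (upper_coeff s d p * w ^ j) * mmonom d)"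
    by (subst upper_coeff_expansion[of p s]) (simp add: sum_distrib_left mult_ac)
  also have "\<dots> \<in> ideal_pow R L j"
  proof (rule ideal_in_sum[OF ideal_in_ideal_pow[OF subring_polyring ideal_L]])
    fix d assume "d \<in> upper_degs s p"
    then have "mmonom d \<in> R" using p by (intro mmonom_in_polyring keys_upper_degs)
    moreover have "upper_coeff s d p * w ^ j \<in> ideal_pow R L j"
      using p_mem by (intro ideal_pow_mult_w_power) (simp add: extended_ideal_def)
    ultimately show "upper_coeff s d p * w ^ j * mmonom d \<in> ideal_pow R L j"
      by (rule ideal_in_mult_right[OF ideal_in_ideal_pow[OF subring_polyring ideal_L]])
  qed
  finally show "p * w ^ j \<in> ideal_pow R L j" .
qed

lemma extended_ideal_colon:
  assumes f: "f \<in> S"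
  shows "extended_ideal {..<n} s (colon S (ideal_pow S I j) f)
       = colon R (ideal_pow R L j) (f * w ^ j)"
proof (rule set_eqI)
  fix r
  show "r \<in> extended_ideal {..<n} s (colon S (ideal_pow S I j) f)
    \<longleftrightarrow> r \<in> colon R (ideal_pow R L j) (f * w ^ j)"
  proof (cases "r \<in> R")
    case True
    have "r \<in> colon R (ideal_pow R L j) (f * w ^ j)
        \<longleftrightarrow> (r * f) * w ^ j \<in> ideal_pow R L j"
      using True by (simp add: colon_def mult.assoc)
    also have "\<dots> \<longleftrightarrow> r * f \<in> extended_ideal {..<n} s (ideal_pow S I j)"
      using True f S_subset_R by (intro mult_w_power_mem_ideal_pow_iff subring_mult[OF subring_polyring]) auto
    also have "\<dots> \<longleftrightarrow> (\<forall>d. upper_coeff s d r * f \<in> ideal_pow S I j)"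
      using True f S_subset_R by (intro mult_lower_mem_extended_ideal_iff) auto
    also have "\<dots> \<longleftrightarrow> r \<in> extended_ideal {..<n} s (colon S (ideal_pow S I j) f)"
      using True by (simp add: extended_ideal_def colon_def upper_coeff_in_polyring)
    finally show ?thesis ..
  qed (simp add: extended_ideal_def colon_def)
qed

lemma extended_ideal_mem_Ass:
  assumes "P \<in> Ass S (ideal_pow S I j)"
  shows "extended_ideal {..<n} s P \<in> Ass R (ideal_pow R L j)"
proof -
  obtain f where P: "prime_ideal_in S P" and f: "f \<in> S" and Pf: "P = colon S (ideal_pow S I j) f"
    using assms unfolding Ass_def by blast
  have "f * w ^ j \<in> R"
    using f S_subset_R by (intro subring_mult[OF subring_polyring] w_power_in_R) blast
  then show ?thesis
    using prime_ideal_in_extended_ideal[OF P] extended_ideal_colon[OF f] Pf unfolding Ass_def by blast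
qed

lemma mem_Ass_if_extended_ideal_mem_Ass:
  assumes P: "prime_ideal_in S P" and PR_Ass: "extended_ideal {..<n} s P \<in> Ass R (ideal_pow R L j)"
  shows "P \<in> Ass S (ideal_pow S I j)"
proof -
  let ?PR = "extended_ideal {..<n} s P"
  have Pid: "ideal_in S P" using P by (simp add: prime_ideal_in_def)
  have Ij: "ideal_in S (ideal_pow S I j)" by (rule ideal_in_ideal_pow[OF subring_polyring ideal_I])
  obtain g where g: "g \<in> R" and PR: "?PR = colon R (ideal_pow R L j) g"
    using PR_Ass unfolding Ass_def by blast
  obtain c where c: "w ^ j = mmonom c" "Poly_Mapping.keys c \<subseteq> {s..<n}" by (rule w_power_mmonom)
  have "Poly_Mapping.keys c \<subseteq> {s..}" using c(2) by auto
  then have "upper_coeff s c (w ^ j) \<notin> P"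
    using prime_ideal_in_one_notin[OF subring_polyring P] by (simp add: c(1) upper_coeff_mmonom)
  then have w_notin: "w ^ j \<in> R - ?PR" using w_power_in_R by (auto simp: extended_ideal_def)
  have "r \<in> P \<longleftrightarrow> (\<forall>d\<in>upper_degs s g. r \<in> colon S (ideal_pow S I j) (upper_coeff s d g))"
    if r: "r \<in> S" for r
  proof -
    have rR: "r \<in> R" using r S_subset_R by blast
    have "r \<in> P \<longleftrightarrow> r * w ^ j \<in> ?PR"
      using prime_ideal_in_mult_iff[OF prime_ideal_in_extended_ideal[OF P] rR w_notin]
        lower_mem_extended_ideal_iff[OF r rR ideal_in_zero[OF Pid]] by simp
    also have "\<dots> \<longleftrightarrow> (g * r) * w ^ j \<in> ideal_pow R L j"
      using PR rR w_power_in_R by (simp add: colon_def subring_mult[OF subring_polyring] algebra_simps)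
    also have "\<dots> \<longleftrightarrow> (\<forall>d. upper_coeff s d g * r \<in> ideal_pow S I j)"
      using g r rR
      by (simp add: mult_w_power_mem_ideal_pow_iff mult_lower_mem_extended_ideal_iff subring_mult[OF subring_polyring])
    also have "\<dots> \<longleftrightarrow> (\<forall>d\<in>upper_degs s g. upper_coeff s d g * r \<in> ideal_pow S I j)"
    proof -
      have "upper_coeff s d g * r \<in> ideal_pow S I j" if "d \<notin> upper_degs s g" for d
        using that ideal_in_zero[OF Ij] by (simp add: upper_coeff_notin)
      then show ?thesis by blast
    qed
    finally show ?thesis using r by (simp add: colon_def mult.commute)
  qed
  then have "P = {r \<in> S. \<forall>d\<in>upper_degs s g. r \<in> colon S (ideal_pow S I j) (upper_coeff s d g)}"
    using ideal_in_subset[OF Pid] by blast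
  then obtain d where "P = colon S (ideal_pow S I j) (upper_coeff s d g)"
    using prime_ideal_in_eq_finite_Inter[OF subring_polyring P finite_upper_degs[of s g],
        where A = "\<lambda>d. colon S (ideal_pow S I j) (upper_coeff s d g)"]
      ideal_in_colon[OF subring_polyring order_refl Ij] by blast
  then show ?thesis using P upper_coeff_in_polyring unfolding Ass_def by blast
qed

theorem not_copersistent:
  assumes "\<not> copersistent S I"
  shows "\<not> copersistent R L"
proof -
  obtain k P where k: "k \<ge> 1" and P_Suc: "P \<in> Ass S (ideal_pow S I (Suc k))"
    and P_k: "P \<notin> Ass S (ideal_pow S I k)"
    using assms unfolding copersistent_def by blast
  have "prime_ideal_in S P" using P_Suc unfolding Ass_def by blast
  then have "extended_ideal {..<n} s P \<notin> Ass R (ideal_pow R L k)"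
    using P_k mem_Ass_if_extended_ideal_mem_Ass by blast
  moreover have "extended_ideal {..<n} s P \<in> Ass R (ideal_pow R L (Suc k))"
    using P_Suc by (rule extended_ideal_mem_Ass)
  ultimately show ?thesis using k unfolding copersistent_def by blast
qed

end

section \<open>Monomial ideals\<close>

lemma ideal_in_monomial_ideal: "monomial_ideal V J \<Longrightarrow> ideal_in (polyring V) J"
  unfolding monomial_ideal_def
  by (auto intro!: ideal_in_gen_ideal subring_polyring mmonom_in_polyring)

lemma monomial_ideal_obtain_mmonom:
  assumes "monomial_ideal V J" "J \<noteq> {0}"
  obtains e where "Poly_Mapping.keys e \<subseteq> V" "mmonom e \<in> J"
proof -
  obtain E where E: "\<forall>e\<in>E. Poly_Mapping.keys e \<subseteq> V" and J: "J = gen_ideal (polyring V) (mmonom ` E)"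
    using assms(1) unfolding monomial_ideal_def by blast
  have "E \<noteq> {}"
  proof
    assume "E = {}"
    then have "J \<subseteq> {0}" unfolding J
      by (intro gen_ideal_least) (simp_all add: ideal_in_def subring_zero[OF subring_polyring])
    then show False using assms ideal_in_zero[OF ideal_in_monomial_ideal] by blast
  qed
  then show ?thesis using that E gen_ideal_gens unfolding J by blast
qed

lemma sandwiched_ideal_monomial_products:
  fixes m :: nat and u e :: "nat \<Rightarrow> nat \<Rightarrow>\<^sub>0 nat" and J :: "nat \<Rightarrow> 'a::comm_ring_1 mpoly set"
  defines "G \<equiv> \<Union>i<m. {mmonom (u i) * g | g. g \<in> J i}"
  assumes "s \<le> n"
    and u: "\<And>i. i < m \<Longrightarrow> Poly_Mapping.keys (u i) \<subseteq> {..<s}"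
    and J: "\<And>i. i < m \<Longrightarrow> J i \<subseteq> polyring {s..<n}"
    and e: "\<And>i. i < m \<Longrightarrow> Poly_Mapping.keys (e i) \<subseteq> {s..<n}"
    and e_J: "\<And>i. i < m \<Longrightarrow> mmonom (e i) \<in> J i"
  shows "sandwiched_ideal s n (gen_ideal (polyring {..<s}) (mmonom ` u ` {..<m}))
           (gen_ideal (polyring {..<n}) G) (\<Sum>i<m. e i)"
proof -
  let ?S = "polyring {..<s} :: 'a mpoly set" and ?R = "polyring {..<n} :: 'a mpoly set"
  let ?I = "gen_ideal ?S (mmonom ` u ` {..<m})" and ?L = "gen_ideal ?R G" and ?W = "\<Sum>i<m. e i"
  have SR: "?S \<subseteq> ?R" and upper_R: "polyring {s..<n} \<subseteq> ?R"
    using \<open>s \<le> n\<close> by (auto intro!: polyring_mono)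
  have u_S: "mmonom (u i) \<in> ?S" if "i < m" for i
    using u[OF that] by (rule mmonom_in_polyring)
  have ideal_I: "ideal_in ?S ?I" using u_S by (intro ideal_in_gen_ideal subring_polyring) blast
  have "G \<subseteq> ?R"
  proof
    fix x assume "x \<in> G"
    then obtain i g where i: "i < m" "g \<in> J i" and x: "x = mmonom (u i) * g" unfolding G_def by blast
    have "mmonom (u i) \<in> ?R" "g \<in> ?R" using u_S[OF i(1)] J[OF i(1)] i(2) SR upper_R by blast+
    then show "x \<in> ?R" unfolding x by (rule subring_mult[OF subring_polyring])
  qed
  then have ideal_L: "ideal_in ?R ?L" by (intro ideal_in_gen_ideal subring_polyring)
  have keys_W: "Poly_Mapping.keys ?W \<subseteq> {s..<n}" using keys_sum[of e "{..<m}"] e by blast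
  have "mmonom (u i) * mmonom ?W \<in> ?L" if i: "i < m" for i
  proof -
    let ?rest = "\<Sum>k\<in>{..<m} - {i}. e k"
    have W_eq: "(mmonom ?W :: 'a mpoly) = mmonom (e i) * mmonom ?rest"
      using i by (simp add: mmonom_mult sum.remove)
    have "mmonom (u i) * mmonom (e i) \<in> G"
      unfolding G_def using i e_J[OF i] by (intro UN_I[of i]) auto
    then have "mmonom (u i) * mmonom (e i) \<in> ?L" using gen_ideal_gens by blast
    moreover have "mmonom ?rest \<in> ?R"
      using keys_sum[of e "{..<m} - {i}"] e by (intro mmonom_in_polyring) fastforce
    ultimately have "mmonom (u i) * mmonom (e i) * mmonom ?rest \<in> ?L"
      by (rule ideal_in_mult_right[OF ideal_L, rotated])
    then show ?thesis by (simp add: W_eq mult.assoc)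
  qed
  then have "mmonom ` u ` {..<m} \<subseteq> colon ?S ?L (mmonom ?W)"
    using u_S unfolding colon_def by blast
  then have "?I \<subseteq> colon ?S ?L (mmonom ?W)"
    by (rule gen_ideal_least[OF ideal_in_colon[OF subring_polyring SR ideal_L]])
  then have mult_W: "b * mmonom ?W \<in> ?L" if "b \<in> ?I" for b
    using that unfolding colon_def by blast
  have "mmonom (u i) * g \<in> extended_ideal {..<n} s ?I" if i: "i < m" and g: "g \<in> J i" for i g
  proof -
    have "mmonom (u i) \<in> mmonom ` u ` {..<m}" using i by blast
    then have "mmonom (u i) \<in> ?I" by (rule subsetD[OF gen_ideal_gens])
    then have "upper_coeff s d g * mmonom (u i) \<in> ?I" for d
      by (rule ideal_in_mult_left[OF ideal_I upper_coeff_in_polyring])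
    moreover have "mmonom (u i) \<in> ?R" "g \<in> ?R" using u_S[OF i] SR J[OF i] g upper_R by blast+
    ultimately have "g * mmonom (u i) \<in> extended_ideal {..<n} s ?I"
      using mult_lower_mem_extended_ideal_iff[OF u_S[OF i]] by blast
    then show ?thesis by (simp add: mult.commute)
  qed
  then have "G \<subseteq> extended_ideal {..<n} s ?I" unfolding G_def by blast
  then have "?L \<subseteq> extended_ideal {..<n} s ?I"
    by (rule gen_ideal_least[OF ideal_in_extended_ideal[OF ideal_I]])
  then show ?thesis
    unfolding sandwiched_ideal_def using \<open>s \<le> n\<close> ideal_I ideal_L keys_W mult_W by blast
qed

theorem corollary3p21:
  fixes s n m :: nat
    and I :: "('a::field) mpoly set"
    and u :: "nat \<Rightarrow> (nat \<Rightarrow>\<^sub>0 nat)"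
    and J :: "nat \<Rightarrow> 'a mpoly set"
  assumes "s \<le> n"
    and "inj_on u {..<m}"
    and "min_monomial_gens {..<s} I (u ` {..<m})"
    and "\<forall>i<m. monomial_ideal {s..<n} (J i) \<and> J i \<noteq> {0}"
    and "\<not> copersistent (polyring {..<s}) I"
  shows "\<not> copersistent (polyring {..<n})
           (gen_ideal (polyring {..<n}) (\<Union>i<m. {mmonom (u i) * g | g. g \<in> J i}))"
proof -
  have u: "\<And>i. i < m \<Longrightarrow> Poly_Mapping.keys (u i) \<subseteq> {..<s}"
    and I: "I = gen_ideal (polyring {..<s}) (mmonom ` u ` {..<m})"
    using assms(3) unfolding min_monomial_gens_def by blast+
  have J: "\<And>i. i < m \<Longrightarrow> J i \<subseteq> polyring {s..<n}"
    using assms(4) ideal_in_monomial_ideal ideal_in_subset by blast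
  have "\<forall>i\<in>{..<m}. \<exists>e. Poly_Mapping.keys e \<subseteq> {s..<n} \<and> mmonom e \<in> J i"
    using assms(4) monomial_ideal_obtain_mmonom by (metis lessThan_iff)
  then obtain e where e: "\<And>i. i < m \<Longrightarrow> Poly_Mapping.keys (e i) \<subseteq> {s..<n} \<and> mmonom (e i) \<in> J i"
    by (metis lessThan_iff)
  have "sandwiched_ideal s n I (gen_ideal (polyring {..<n}) (\<Union>i<m. {mmonom (u i) * g | g. g \<in> J i}))
          (\<Sum>i<m. e i)"
    unfolding I using assms(1) u J e by (intro sandwiched_ideal_monomial_products) auto
  then show ?thesis using assms(5) by (rule sandwiched_ideal.not_copersistent)
qed

end
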